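(* Let $X$ be a random variable taking values in a set $\mathcal{X}$ and $Y \in [0,1]$ a target outcome. Let $\mathcal{F}$ be a class of functions $\mathcal{X} \to \mathbb{R}$ that is closed under affine transformations, i.e. $f \in \mathcal{F}$ implies $a + bf \in \mathcal{F}$ for all $a, b \in \mathbb{R}$, and let $\tilde{\mathcal{F}} = \{f \in \mathcal{F} : \mathcal{R}(f) \subseteq [0,1]\}$. Let $h : \mathcal{X} \to [0,1]$ have countable range $\mathcal{R}(h)$ (with $\mathbb{P}(h(X) = v) > 0$ for each $v \in \mathcal{R}(h)$). If for all $f \in \mathcal{F}$ and $v \in \mathcal{R}(h)$, $$\mathbb{E}\left[(h(X) - Y)^2 - (f(X) - Y)^2 \mid h(X) = v\right] < \alpha^2,$$ then the level sets $\{x \in \mathcal{X} : h(x) = v\}$, $v \in \mathcal{R}(h)$, form a $(2\alpha)$-multicalibrated partition with respect to $\tilde{\mathcal{F}}$ and $Y$.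
   Context: $\mathcal{R}(f)$ denotes the range of a function $f$. A set $S \subseteq \mathcal{X}$ is $\alpha'$-indistinguishable with respect to a function class $\mathcal{G}$ and $Y$ if $|\mathrm{Cov}(g(X), Y \mid X \in S)| \le \alpha'$ for all $g \in \mathcal{G}$. Sets form an $\alpha'$-multicalibrated partition with respect to $\mathcal{G}$ and $Y$ if they partition $\mathcal{X}$ and each is $\alpha'$-indistinguishable with respect to $\mathcal{G}$ and $Y$. *)

theory Defs
  imports "HOL-Probability.Probability" "HOL-Library.Disjoint_Sets"
begin

definition cond_expect :: "'a measure \<Rightarrow> ('a \<Rightarrow> real) \<Rightarrow> 'a set \<Rightarrow> real" where
  "cond_expect M Z A = (\<integral>\<omega>. indicator A \<omega> * Z \<omega> \<partial>M) / measure M A"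

definition cond_cov :: "'a measure \<Rightarrow> ('a \<Rightarrow> 'b) \<Rightarrow> ('a \<Rightarrow> real) \<Rightarrow> ('b \<Rightarrow> real) \<Rightarrow> 'b set \<Rightarrow> real" where
  "cond_cov M X Y g S =
     (let A = X -` S \<inter> space M in
      cond_expect M (\<lambda>\<omega>. g (X \<omega>) * Y \<omega>) A
      - cond_expect M (\<lambda>\<omega>. g (X \<omega>)) A * cond_expect M Y A)"

definition indistinguishable ::
  "'a measure \<Rightarrow> ('a \<Rightarrow> 'b) \<Rightarrow> ('a \<Rightarrow> real) \<Rightarrow> ('b \<Rightarrow> real) set \<Rightarrow> real \<Rightarrow> 'b set \<Rightarrow> bool" where
  "indistinguishable M X Y G \<alpha>' S \<longleftrightarrow> (\<forall>g\<in>G. \<bar>cond_cov M X Y g S\<bar> \<le> \<alpha>')"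

definition multicalibrated_partition ::
  "'a measure \<Rightarrow> ('a \<Rightarrow> 'b) \<Rightarrow> ('a \<Rightarrow> real) \<Rightarrow> 'b set \<Rightarrow> ('b \<Rightarrow> real) set \<Rightarrow> real \<Rightarrow> 'b set set \<Rightarrow> bool" where
  "multicalibrated_partition M X Y D G \<alpha>' P \<longleftrightarrow>
     partition_on D P \<and> (\<forall>S\<in>P. indistinguishable M X Y G \<alpha>' S)"

end

theory Submission
  imports Defs
begin

(* Fix a level set A = {h(X) = v} and a test function G = g(X) with values in [0,1].
  Moving the constant prediction v along G, to v + \<eta>(G - E[G | A]), lowers the conditional
  squared loss by exactly 2\<eta> Cov(G, Y | A) - \<eta>^2 Var(G | A), and Var(G | A) \<le> 1.
  Every such update is affine in g, hence in F, so by hypothesis this gain is below \<alpha>^2 for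
  every \<eta>; choosing \<eta> = Cov(G, Y | A) gives Cov(G, Y | A)^2 < \<alpha>^2. *)

definition event_cov :: "'a measure \<Rightarrow> 'a set \<Rightarrow> ('a \<Rightarrow> real) \<Rightarrow> ('a \<Rightarrow> real) \<Rightarrow> real" where
  "event_cov M A U V =
     cond_expect M (\<lambda>\<omega>. U \<omega> * V \<omega>) A - cond_expect M U A * cond_expect M V A"

lemma cond_cov_eq_event_cov:
  "cond_cov M X Y g S = event_cov M (X -` S \<inter> space M) (\<lambda>\<omega>. g (X \<omega>)) Y"
  by (simp add: cond_cov_def event_cov_def Let_def)

lemma cond_expect_cong:
  "(\<And>\<omega>. \<omega> \<in> A \<Longrightarrow> Z \<omega> = W \<omega>) \<Longrightarrow> cond_expect M Z A = cond_expect M W A"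
  unfolding cond_expect_def by (metis indicator_simps(2) mult_eq_0_iff)

lemma cond_expect_mult_left:
  "cond_expect M (\<lambda>\<omega>. c * Z \<omega>) A = c * cond_expect M Z A"
  by (simp add: cond_expect_def mult.left_commute)

lemma integrable_indicator_mult_real:
  fixes Z :: "'a \<Rightarrow> real"
  shows "A \<in> sets M \<Longrightarrow> integrable M Z \<Longrightarrow> integrable M (\<lambda>\<omega>. indicator A \<omega> * Z \<omega>)"
  using integrable_real_mult_indicator[of A M Z] by (simp add: mult.commute)

lemma cond_expect_add:
  fixes Z W :: "'a \<Rightarrow> real"
  assumes "A \<in> sets M" "integrable M Z" "integrable M W"
  shows "cond_expect M (\<lambda>\<omega>. Z \<omega> + W \<omega>) A = cond_expect M Z A + cond_expect M W A"
  using assms by (simp add: cond_expect_def distrib_left add_divide_distrib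
      integrable_indicator_mult_real)

lemma cond_expect_diff:
  fixes Z W :: "'a \<Rightarrow> real"
  assumes "A \<in> sets M" "integrable M Z" "integrable M W"
  shows "cond_expect M (\<lambda>\<omega>. Z \<omega> - W \<omega>) A = cond_expect M Z A - cond_expect M W A"
  using assms by (simp add: cond_expect_def right_diff_distrib diff_divide_distrib
      integrable_indicator_mult_real)

lemma cond_expect_mono:
  fixes Z W :: "'a \<Rightarrow> real"
  assumes "A \<in> sets M" "integrable M Z" "integrable M W" "\<And>\<omega>. \<omega> \<in> A \<Longrightarrow> Z \<omega> \<le> W \<omega>"
  shows "cond_expect M Z A \<le> cond_expect M W A"
  unfolding cond_expect_def
proof (rule divide_right_mono)
  show "(\<integral>\<omega>. indicator A \<omega> * Z \<omega> \<partial>M) \<le> (\<integral>\<omega>. indicator A \<omega> * W \<omega> \<partial>M)"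
    using assms by (intro integral_mono integrable_indicator_mult_real) (auto simp: indicator_def)
qed simp

lemma abs_less_if_quadratic_gain_less:
  fixes c s \<alpha> :: real
  assumes "\<And>\<eta>. 2 * \<eta> * c - \<eta>\<^sup>2 * s < \<alpha>\<^sup>2" "s \<le> 1" "0 \<le> \<alpha>"
  shows "\<bar>c\<bar> < \<alpha>"
proof -
  have "c\<^sup>2 \<le> 2 * c * c - c\<^sup>2 * s"
    using assms(2) mult_left_mono[OF assms(2), of "c\<^sup>2"] by (simp add: power2_eq_square)
  then have "c\<^sup>2 < \<alpha>\<^sup>2"
    using assms(1)[of c] by linarith
  then show ?thesis
    using assms(3) by (simp add: power2_less_imp_less abs_le_square_iff)
qed

context finite_measure
begin

lemma cond_expect_const:
  assumes "A \<in> sets M" "measure M A \<noteq> 0"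
  shows "cond_expect M (\<lambda>_. c) A = c"
  using assms by (simp add: cond_expect_def)

lemma integrable_unit_valued:
  "f \<in> borel_measurable M \<Longrightarrow> (\<forall>\<omega>\<in>space M. f \<omega> \<in> {0..1::real}) \<Longrightarrow> integrable M f"
  by (rule integrable_const_bound[where B = 1]) auto

lemma cond_expect_affine_sq_loss_gain:
  fixes G Y :: "'a \<Rightarrow> real"
  assumes A: "A \<in> sets M" "measure M A \<noteq> 0"
    and int: "integrable M G" "integrable M Y" "integrable M (\<lambda>\<omega>. G \<omega> * Y \<omega>)"
      "integrable M (\<lambda>\<omega>. G \<omega> * G \<omega>)"
  defines "\<mu> \<equiv> cond_expect M G A"
  shows "cond_expect M (\<lambda>\<omega>. (v - Y \<omega>)\<^sup>2 - (v + \<eta> * (G \<omega> - \<mu>) - Y \<omega>)\<^sup>2) A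
           = 2 * \<eta> * event_cov M A G Y - \<eta>\<^sup>2 * event_cov M A G G"
proof -
  have "cond_expect M (\<lambda>\<omega>. (v - Y \<omega>)\<^sup>2 - (v + \<eta> * (G \<omega> - \<mu>) - Y \<omega>)\<^sup>2) A
      = cond_expect M (\<lambda>\<omega>. 2 * \<eta> * (G \<omega> * Y \<omega>) - 2 * \<eta> * \<mu> * Y \<omega>
          + (2 * \<eta>\<^sup>2 * \<mu> - 2 * \<eta> * v) * G \<omega> - \<eta>\<^sup>2 * (G \<omega> * G \<omega>)
          + (2 * \<eta> * v * \<mu> - \<eta>\<^sup>2 * \<mu>\<^sup>2)) A"
    by (rule cond_expect_cong) (simp add: power2_eq_square algebra_simps)
  also have "\<dots> = 2 * \<eta> * cond_expect M (\<lambda>\<omega>. G \<omega> * Y \<omega>) A - 2 * \<eta> * \<mu> * cond_expect M Y A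
          + (2 * \<eta>\<^sup>2 * \<mu> - 2 * \<eta> * v) * \<mu> - \<eta>\<^sup>2 * cond_expect M (\<lambda>\<omega>. G \<omega> * G \<omega>) A
          + (2 * \<eta> * v * \<mu> - \<eta>\<^sup>2 * \<mu>\<^sup>2)"
    using A int by (simp add: cond_expect_add cond_expect_diff cond_expect_mult_left
        cond_expect_const \<mu>_def)
  also have "\<dots> = 2 * \<eta> * event_cov M A G Y - \<eta>\<^sup>2 * event_cov M A G G"
    by (simp add: event_cov_def \<mu>_def power2_eq_square algebra_simps)
  finally show ?thesis .
qed

lemma event_cov_self_le_one:
  assumes "A \<in> sets M" "measure M A \<noteq> 0"
    and "G \<in> borel_measurable M" "\<forall>\<omega>\<in>space M. G \<omega> \<in> {0..1}"
  shows "event_cov M A G G \<le> 1"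
proof -
  have "cond_expect M (\<lambda>\<omega>. G \<omega> * G \<omega>) A \<le> cond_expect M (\<lambda>_. 1) A"
    using assms sets.sets_into_space[OF assms(1)]
    by (intro cond_expect_mono integrable_unit_valued) (auto intro: mult_le_one)
  also have "\<dots> = 1"
    using assms(1,2) by (rule cond_expect_const)
  finally show ?thesis
    using zero_le_square[of "cond_expect M G A"] unfolding event_cov_def by linarith
qed

lemma abs_event_cov_less_if_no_affine_gain:
  assumes A: "A \<in> sets M" "measure M A \<noteq> 0"
    and G: "G \<in> borel_measurable M" "\<forall>\<omega>\<in>space M. G \<omega> \<in> {0..1}"
    and Y: "Y \<in> borel_measurable M" "\<forall>\<omega>\<in>space M. Y \<omega> \<in> {0..1}"
    and "0 \<le> \<alpha>"
    and no_gain: "\<And>\<eta>. cond_expect M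
      (\<lambda>\<omega>. (v - Y \<omega>)\<^sup>2 - (v + \<eta> * (G \<omega> - cond_expect M G A) - Y \<omega>)\<^sup>2) A < \<alpha>\<^sup>2"
  shows "\<bar>event_cov M A G Y\<bar> < \<alpha>"
proof (rule abs_less_if_quadratic_gain_less)
  have "integrable M G" "integrable M Y" "integrable M (\<lambda>\<omega>. G \<omega> * Y \<omega>)"
    "integrable M (\<lambda>\<omega>. G \<omega> * G \<omega>)"
    using G Y by (auto intro!: integrable_unit_valued mult_le_one)
  then show "2 * \<eta> * event_cov M A G Y - \<eta>\<^sup>2 * event_cov M A G G < \<alpha>\<^sup>2" for \<eta>
    using no_gain[of \<eta>] by (simp add: cond_expect_affine_sq_loss_gain[OF A])
  show "event_cov M A G G \<le> 1"
    using A G by (rule event_cov_self_le_one)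
qed fact

lemma abs_cond_cov_level_set_less:
  assumes X: "X \<in> measurable M N" and h: "h \<in> borel_measurable N"
    and pos: "measure M {\<omega>\<in>space M. h (X \<omega>) = v} \<noteq> 0"
    and g: "g \<in> borel_measurable N" "\<forall>x\<in>space N. g x \<in> {0..1}"
    and Y: "Y \<in> borel_measurable M" "\<forall>\<omega>\<in>space M. Y \<omega> \<in> {0..1}"
    and "0 \<le> \<alpha>"
    and no_gain: "\<And>a b. cond_expect M (\<lambda>\<omega>. (h (X \<omega>) - Y \<omega>)\<^sup>2 - (a + b * g (X \<omega>) - Y \<omega>)\<^sup>2)
      {\<omega>\<in>space M. h (X \<omega>) = v} < \<alpha>\<^sup>2"
  shows "\<bar>cond_cov M X Y g {x\<in>space N. h x = v}\<bar> < \<alpha>"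
proof -
  define A where "A = {\<omega>\<in>space M. h (X \<omega>) = v}"
  let ?\<mu> = "cond_expect M (\<lambda>\<omega>. g (X \<omega>)) A"
  have preimage: "X -` {x\<in>space N. h x = v} \<inter> space M = A"
    using measurable_space[OF X] by (auto simp: A_def)
  have "\<bar>event_cov M A (\<lambda>\<omega>. g (X \<omega>)) Y\<bar> < \<alpha>"
  proof (rule abs_event_cov_less_if_no_affine_gain)
    show "A \<in> sets M"
      unfolding A_def using X h by measurable
    show "(\<lambda>\<omega>. g (X \<omega>)) \<in> borel_measurable M"
      using X g(1) by measurable
    fix \<eta>
    have "cond_expect M (\<lambda>\<omega>. (v - Y \<omega>)\<^sup>2 - (v + \<eta> * (g (X \<omega>) - ?\<mu>) - Y \<omega>)\<^sup>2) A
        = cond_expect M (\<lambda>\<omega>. (h (X \<omega>) - Y \<omega>)\<^sup>2 - ((v - \<eta> * ?\<mu>) + \<eta> * g (X \<omega>) - Y \<omega>)\<^sup>2) A"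
      by (rule cond_expect_cong) (simp add: A_def algebra_simps)
    then show "cond_expect M (\<lambda>\<omega>. (v - Y \<omega>)\<^sup>2 - (v + \<eta> * (g (X \<omega>) - ?\<mu>) - Y \<omega>)\<^sup>2) A < \<alpha>\<^sup>2"
      using no_gain unfolding A_def by simp
  qed (use pos g Y \<open>0 \<le> \<alpha>\<close> measurable_space[OF X] in \<open>auto simp: A_def\<close>)
  then show ?thesis
    unfolding cond_cov_eq_event_cov preimage .
qed

end

theorem lemma5:
  fixes M :: "'a measure" and N :: "'b measure"
    and X :: "'a \<Rightarrow> 'b" and Y :: "'a \<Rightarrow> real"
    and F :: "('b \<Rightarrow> real) set" and h :: "'b \<Rightarrow> real" and \<alpha> :: real
  assumes "prob_space M"
    and "X \<in> measurable M N"
    and "Y \<in> borel_measurable M"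
    and "\<forall>\<omega>\<in>space M. Y \<omega> \<in> {0..1}"
    and "\<forall>f\<in>F. f \<in> borel_measurable N"
    and "\<forall>f\<in>F. \<forall>a b. (\<lambda>x. a + b * f x) \<in> F"
    and "h \<in> borel_measurable N"
    and "\<forall>x\<in>space N. h x \<in> {0..1}"
    and "countable (h ` space N)"
    and "\<forall>v\<in>h ` space N. measure M {\<omega>\<in>space M. h (X \<omega>) = v} > 0"
    and "0 \<le> \<alpha>"
    and "\<forall>f\<in>F. \<forall>v\<in>h ` space N.
           cond_expect M (\<lambda>\<omega>. (h (X \<omega>) - Y \<omega>)\<^sup>2 - (f (X \<omega>) - Y \<omega>)\<^sup>2)
             {\<omega>\<in>space M. h (X \<omega>) = v} < \<alpha>\<^sup>2"
  shows "multicalibrated_partition M X Y (space N) {f\<in>F. f ` space N \<subseteq> {0..1}} (2 * \<alpha>)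
           ((\<lambda>v. {x\<in>space N. h x = v}) ` (h ` space N))"
proof -
  interpret prob_space M by fact
  have "\<bar>cond_cov M X Y g {x\<in>space N. h x = v}\<bar> < \<alpha>"
    if v: "v \<in> h ` space N" and g: "g \<in> F" "g ` space N \<subseteq> {0..1}" for v g
  proof (rule abs_cond_cov_level_set_less[OF assms(2,7) _ _ _ assms(3,4,11)])
    show "measure M {\<omega>\<in>space M. h (X \<omega>) = v} \<noteq> 0"
      using assms(10) v by fastforce
    show "g \<in> borel_measurable N" "\<forall>x\<in>space N. g x \<in> {0..1}"
      using assms(5) g by blast+
    fix a b
    have "(\<lambda>x. a + b * g x) \<in> F"
      using assms(6) g(1) by blast
    from bspec[OF bspec[OF assms(12) this] v]
    show "cond_expect M (\<lambda>\<omega>. (h (X \<omega>) - Y \<omega>)\<^sup>2 - (a + b * g (X \<omega>) - Y \<omega>)\<^sup>2)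
      {\<omega>\<in>space M. h (X \<omega>) = v} < \<alpha>\<^sup>2" by simp
  qed
  then show ?thesis
    using \<open>0 \<le> \<alpha>\<close> unfolding multicalibrated_partition_def indistinguishable_def
    by (fastforce intro!: partition_onI simp: disjnt_def)
qed

end
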